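(* Let $\mathcal G$ be a second countable Baire topological space, let $X$ be a finite-dimensional $C^1$ manifold (Hausdorff, second countable), and let $\mathcal H \subset \mathcal G \times X$ be a closed subset. Suppose that for each $(g_0,x_0)\in\mathcal H$ there exists an $n$-dimensional slice across $\mathcal H$ at $(g_0,x_0)$ for some $n > \dim X$. Then the set \[ \{g \in \mathcal G : (g,x) \in \mathcal H \text{ for some } x \in X \} \] is meager in $\mathcal G$. If moreover $X$ is compact, then this set is closed and nowhere dense.
   Context: Given $(g_0,x_0)\in\mathcal H$ and a positive integer $n$, an $n$-dimensional slice across $\mathcal H$ at $(g_0,x_0)$ is a map $\Phi:U\times V\to\mathbb R^n$, where $U$ is a neighborhood of $0$ in $\mathbb R^n$ and $V$ a neighborhood of $x_0$ in $X$, such that: (1) there is a continuous map $\rho:U\to\mathcal G$ with $\rho(0)=g_0$; (2) there is a continuous map $\pi:\rho(U)\times V\to\mathbb R^n$ with $\pi(\mathcal H)=\{0\}$ (i.e. $\pi$ vanishes on $\mathcal H\cap(\rho(U)\times V)$); (3) $\Phi(s,x)=\pi(\rho(s),x)$ is $C^1$ on $U\times V$; (4) $\det d_s\Phi(0,x_0)\neq 0$. *)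

theory Defs
  imports "HOL-Analysis.Analysis" "HOL-Combinatorics.Permutations"
begin

definition nowhere_dense_in :: "'a topology \<Rightarrow> 'a set \<Rightarrow> bool" where
  "nowhere_dense_in T S \<longleftrightarrow> S \<subseteq> topspace T \<and> T interior_of (T closure_of S) = {}"

definition meager_in :: "'a topology \<Rightarrow> 'a set \<Rightarrow> bool" where
  "meager_in T S \<longleftrightarrow>
     (\<exists>\<N>. countable \<N> \<and> (\<forall>N\<in>\<N>. nowhere_dense_in T N) \<and> S = \<Union>\<N>)"

definition Baire_space :: "'a topology \<Rightarrow> bool" where
  "Baire_space T \<longleftrightarrow>
     (\<forall>\<U>. countable \<U> \<and> (\<forall>U\<in>\<U>. openin T U \<and> T closure_of U = topspace T)
        \<longrightarrow> T closure_of (topspace T \<inter> \<Inter>\<U>) = topspace T)"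

text \<open>The points of R^p are the elements of topspace (Euclidean_space p). A pair
  (s,y) in R^p x R^q is encoded as the concatenated vector in R^(p+q).\<close>

definition concat_vec :: "nat \<Rightarrow> (nat \<Rightarrow> real) \<Rightarrow> (nat \<Rightarrow> real) \<Rightarrow> (nat \<Rightarrow> real)" where
  "concat_vec p s y = (\<lambda>i. if i < p then s i else y (i - p))"

definition partial_diffble :: "((nat \<Rightarrow> real) \<Rightarrow> (nat \<Rightarrow> real)) \<Rightarrow> nat \<Rightarrow> nat \<Rightarrow> (nat \<Rightarrow> real) \<Rightarrow> bool" where
  "partial_diffble f i j a \<longleftrightarrow> (\<lambda>t. f (a(j := a j + t)) i) differentiable (at 0)"

definition partial :: "((nat \<Rightarrow> real) \<Rightarrow> (nat \<Rightarrow> real)) \<Rightarrow> nat \<Rightarrow> nat \<Rightarrow> (nat \<Rightarrow> real) \<Rightarrow> real" where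
  "partial f i j a = deriv (\<lambda>t. f (a(j := a j + t)) i) 0"

definition C1_on :: "nat \<Rightarrow> nat \<Rightarrow> (nat \<Rightarrow> real) set \<Rightarrow> ((nat \<Rightarrow> real) \<Rightarrow> (nat \<Rightarrow> real)) \<Rightarrow> bool" where
  "C1_on p q S f \<longleftrightarrow>
     (\<forall>i<q. \<forall>j<p. (\<forall>a\<in>S. partial_diffble f i j a) \<and>
        continuous_map (subtopology (Euclidean_space p) S) euclideanreal (partial f i j))"

definition det_n :: "nat \<Rightarrow> (nat \<Rightarrow> nat \<Rightarrow> real) \<Rightarrow> real" where
  "det_n n M = (\<Sum>\<sigma> | \<sigma> permutes {..<n}. of_int (sign \<sigma>) * (\<Prod>i<n. M i (\<sigma> i)))"

definition chart :: "'x topology \<Rightarrow> nat \<Rightarrow> 'x set \<times> ('x \<Rightarrow> (nat \<Rightarrow> real)) \<Rightarrow> bool" where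
  "chart X m c \<longleftrightarrow> openin X (fst c) \<and> openin (Euclidean_space m) (snd c ` fst c) \<and>
     homeomorphic_map (subtopology X (fst c)) (subtopology (Euclidean_space m) (snd c ` fst c)) (snd c)"

definition C1_atlas :: "'x topology \<Rightarrow> nat \<Rightarrow> ('x set \<times> ('x \<Rightarrow> (nat \<Rightarrow> real))) set \<Rightarrow> bool" where
  "C1_atlas X m A \<longleftrightarrow> (\<forall>c\<in>A. chart X m c) \<and> topspace X \<subseteq> (\<Union>c\<in>A. fst c) \<and>
     (\<forall>c1\<in>A. \<forall>c2\<in>A. C1_on m m (snd c1 ` (fst c1 \<inter> fst c2))
                        (snd c2 \<circ> inv_into (fst c1) (snd c1)))"

definition C1_manifold :: "'x topology \<Rightarrow> nat \<Rightarrow> ('x set \<times> ('x \<Rightarrow> (nat \<Rightarrow> real))) set \<Rightarrow> bool" where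
  "C1_manifold X m A \<longleftrightarrow> Hausdorff_space X \<and> second_countable X \<and> C1_atlas X m A"

definition C1_on_prod :: "'x topology \<Rightarrow> nat \<Rightarrow> ('x set \<times> ('x \<Rightarrow> (nat \<Rightarrow> real))) set \<Rightarrow>
     nat \<Rightarrow> nat \<Rightarrow> (nat \<Rightarrow> real) set \<Rightarrow> 'x set \<Rightarrow> ((nat \<Rightarrow> real) \<Rightarrow> 'x \<Rightarrow> (nat \<Rightarrow> real)) \<Rightarrow> bool" where
  "C1_on_prod X m A n q U V F \<longleftrightarrow>
     (\<forall>c\<in>A. C1_on (n + m) q
        {concat_vec n s y | s y. s \<in> U \<and> y \<in> snd c ` (V \<inter> fst c)}
        (\<lambda>z. F (\<lambda>i. if i < n then z i else 0) (inv_into (fst c) (snd c) (\<lambda>i. z (n + i)))))"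

definition slice_across ::
  "'g topology \<Rightarrow> 'x topology \<Rightarrow> nat \<Rightarrow> ('x set \<times> ('x \<Rightarrow> (nat \<Rightarrow> real))) set \<Rightarrow>
   ('g \<times> 'x) set \<Rightarrow> 'g \<Rightarrow> 'x \<Rightarrow> nat \<Rightarrow>
   (nat \<Rightarrow> real) set \<Rightarrow> 'x set \<Rightarrow> ((nat \<Rightarrow> real) \<Rightarrow> 'x \<Rightarrow> (nat \<Rightarrow> real)) \<Rightarrow> bool" where
  "slice_across G X m A H g0 x0 n U V \<Phi> \<longleftrightarrow>
     openin (Euclidean_space n) U \<and> (\<lambda>i. 0) \<in> U \<and> openin X V \<and> x0 \<in> V \<and>
     (\<exists>\<rho> \<pi>.
        continuous_map (subtopology (Euclidean_space n) U) G \<rho> \<and> \<rho> (\<lambda>i. 0) = g0 \<and>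
        continuous_map (subtopology (prod_topology G X) (\<rho> ` U \<times> V)) (Euclidean_space n) (\<lambda>(g,x). \<pi> g x) \<and>
        (\<forall>g x. (g, x) \<in> H \<inter> (\<rho> ` U \<times> V) \<longrightarrow> \<pi> g x = (\<lambda>i. 0)) \<and>
        (\<forall>s\<in>U. \<forall>x\<in>V. \<Phi> s x = \<pi> (\<rho> s) x)) \<and>
     C1_on_prod X m A n n U V \<Phi> \<and>
     det_n n (\<lambda>i j. partial (\<lambda>s. \<Phi> s x0) i j (\<lambda>i. 0)) \<noteq> 0"

definition has_slice ::
  "'g topology \<Rightarrow> 'x topology \<Rightarrow> nat \<Rightarrow> ('x set \<times> ('x \<Rightarrow> (nat \<Rightarrow> real))) set \<Rightarrow>
   ('g \<times> 'x) set \<Rightarrow> 'g \<Rightarrow> 'x \<Rightarrow> nat \<Rightarrow> bool" where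
  "has_slice G X m A H g0 x0 n \<longleftrightarrow> (\<exists>U V \<Phi>. slice_across G X m A H g0 x0 n U V \<Phi>)"

end

theory Submission
  imports Defs Jordan_Normal_Form.Determinant
begin

(* Suppose the projection of H over a compact K had an interior point. Cover X by countably many
   compact sets L; the projections of H over K \<inter> L are closed, and by Baire's theorem some point g
   of the interior is interior to each of them that contains it. Take (g, x) \<in> H and a slice
   Phi(s, x) = pi(rho s, x) there. In a chart, the mean value theorem and the invertibility of the
   s-derivative show that zeros (s, y), (s', y') of Phi near (0, x) satisfy |s - s'| \<le> K |y - y'|.
   As n > dim X, such a co-Lipschitz correspondence cannot reach every small s (count the points of
   a fine grid in s against the boxes they would occupy in y), so arbitrarily small s have
   Phi(s, .) \<noteq> 0 on a neighbourhood N of x. Then rho(s), which tends to g, stays off the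
   projection of H over N, so g is not interior to the projection over K \<inter> L for any L \<subseteq> N
   containing x: a contradiction. Hence projections over compact sets are closed and nowhere dense,
   and the whole projection is a countable union of them. *)

section \<open>Invertible matrices\<close>

lemma det_n_eq_det: "det_n n M = Determinant.det (mat n n (\<lambda>(i,j). M i j))"
  unfolding det_n_def
  by (subst det_def'[of _ n]) (auto simp: atLeast0LessThan intro!: sum.cong prod.cong)

lemma det_n_cong:
  assumes "\<And>i j. i < n \<Longrightarrow> j < n \<Longrightarrow> M i j = M' i j"
  shows "det_n n M = det_n n M'"
  unfolding det_n_def
proof (intro sum.cong refl arg_cong2[where f="(*)"] prod.cong)
  fix \<sigma> i assume "\<sigma> \<in> {\<sigma>. \<sigma> permutes {..<n}}" "i \<in> {..<n}"
  then show "M i (\<sigma> i) = M' i (\<sigma> i)"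
    using assms permutes_in_image[of \<sigma> "{..<n}" i] by auto
qed

lemma det_n_nonzero_left_inverse:
  fixes M :: "nat \<Rightarrow> nat \<Rightarrow> real"
  assumes "det_n n M \<noteq> 0"
  obtains B where "\<And>i j. i < n \<Longrightarrow> j < n \<Longrightarrow> (\<Sum>k<n. B i k * M k j) = (if i = j then 1 else 0)"
proof -
  define A where "A = mat n n (\<lambda>(i,j). M i j)"
  have A: "A \<in> carrier_mat n n" unfolding A_def by simp
  have "Determinant.det A \<noteq> 0" using assms by (simp add: det_n_eq_det A_def)
  then obtain B where B: "B \<in> carrier_mat n n" and BA: "B * A = 1\<^sub>m n"
    using det_non_zero_imp_unit[OF A] unfolding Units_def by (auto simp: ring_mat_def)
  have "(\<Sum>k<n. B $$ (i,k) * M k j) = (if i = j then 1 else 0)" if "i < n" "j < n" for i j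
  proof -
    have "(B * A) $$ (i,j) = (if i = j then 1 else 0)" using BA that by simp
    then show ?thesis using B that unfolding A_def
      by (simp add: times_mat_def scalar_prod_def atLeast0LessThan)
  qed
  then show thesis by (rule that)
qed

lemma det_n_nonzero_bounded_inverse:
  fixes M :: "nat \<Rightarrow> nat \<Rightarrow> real"
  assumes "det_n n M \<noteq> 0"
  obtains \<beta> where "\<beta> > 0"
    and "\<And>v T i. (\<forall>k<n. \<bar>\<Sum>j<n. M k j * v j\<bar> \<le> T) \<Longrightarrow> i < n \<Longrightarrow> \<bar>v i\<bar> \<le> \<beta> * T"
proof -
  obtain B where BM: "\<And>i j. i < n \<Longrightarrow> j < n \<Longrightarrow> (\<Sum>k<n. B i k * M k j) = (if i = j then 1 else 0)"
    using det_n_nonzero_left_inverse[OF assms] by blast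
  define \<beta> where "\<beta> = 1 + (\<Sum>i<n. \<Sum>k<n. \<bar>B i k\<bar>)"
  have "\<beta> > 0" unfolding \<beta>_def by (smt (verit) sum_nonneg abs_ge_zero)
  moreover have "\<bar>v i\<bar> \<le> \<beta> * T" if Mv: "\<forall>k<n. \<bar>\<Sum>j<n. M k j * v j\<bar> \<le> T" and i: "i < n" for v T i
  proof -
    have T: "T \<ge> 0" using Mv i by force
    have "(\<Sum>j<n. (if i = j then 1 else 0) * v j) = (\<Sum>j<n. if i = j then v j else 0)"
      by (intro sum.cong) auto
    then have "v i = (\<Sum>j<n. (if i = j then 1 else 0) * v j)" using i by simp
    also have "\<dots> = (\<Sum>j<n. (\<Sum>k<n. B i k * M k j) * v j)" using BM i by simp
    also have "\<dots> = (\<Sum>k<n. B i k * (\<Sum>j<n. M k j * v j))"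
      by (simp add: sum_distrib_left sum_distrib_right mult.assoc) (rule sum.swap)
    finally have "\<bar>v i\<bar> \<le> (\<Sum>k<n. \<bar>B i k\<bar> * \<bar>\<Sum>j<n. M k j * v j\<bar>)"
      by (metis (no_types, lifting) abs_mult sum.cong sum_abs)
    also have "\<dots> \<le> (\<Sum>k<n. \<bar>B i k\<bar>) * T"
      using Mv by (auto simp: sum_distrib_right intro!: sum_mono mult_left_mono)
    also have "\<dots> \<le> \<beta> * T"
    proof (rule mult_right_mono[OF _ T])
      have "(\<Sum>k<n. \<bar>B i k\<bar>) \<le> (\<Sum>i<n. \<Sum>k<n. \<bar>B i k\<bar>)"
        using i by (intro member_le_sum) (auto intro: sum_nonneg)
      then show "(\<Sum>k<n. \<bar>B i k\<bar>) \<le> \<beta>" unfolding \<beta>_def by simp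
    qed
    finally show ?thesis .
  qed
  ultimately show thesis using that by blast
qed

section \<open>Cubes in Euclidean space\<close>

definition cube :: "nat \<Rightarrow> (nat \<Rightarrow> real) \<Rightarrow> real \<Rightarrow> (nat \<Rightarrow> real) set" where
  "cube p c r = {z \<in> topspace (Euclidean_space p). \<forall>l<p. \<bar>z l - c l\<bar> \<le> r}"

lemma cube_mono: "r \<le> r' \<Longrightarrow> cube p c r \<subseteq> cube p c r'"
  unfolding cube_def by force

lemma centre_in_cube: "c \<in> topspace (Euclidean_space p) \<Longrightarrow> 0 \<le> r \<Longrightarrow> c \<in> cube p c r"
  unfolding cube_def by simp

lemma openin_Euclidean_space_contains_cube:
  assumes "openin (Euclidean_space p) S" "a \<in> S"
  obtains r where "r > 0" "cube p a r \<subseteq> S"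
proof -
  obtain T where T: "openin (powertop_real UNIV) T" and ST: "S = T \<inter> {x. \<forall>i\<ge>p. x i = 0}"
    using assms(1) unfolding Euclidean_space_def openin_subtopology by blast
  obtain X where X: "a \<in> (\<Pi>\<^sub>E i\<in>UNIV. X i)" "\<forall>i. openin euclideanreal (X i)"
     "finite {i. X i \<noteq> topspace euclideanreal}" "(\<Pi>\<^sub>E i\<in>UNIV. X i) \<subseteq> T"
    using product_topology_open_contains_basis[OF T] assms(2) ST by blast
  define F where "F = {i. X i \<noteq> UNIV}"
  have F: "finite F" using X(3) unfolding F_def by simp
  have "\<forall>i\<in>F. \<exists>r>0. cball (a i) r \<subseteq> X i"
    using X(1,2) by (force simp: open_contains_cball)
  then obtain R where R: "\<And>i. i \<in> F \<Longrightarrow> R i > 0 \<and> cball (a i) (R i) \<subseteq> X i" by metis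
  define r where "r = Min (insert 1 (R ` F))"
  have "r > 0" unfolding r_def using F R by (subst Min_gr_iff) auto
  moreover have "cube p a r \<subseteq> S"
  proof
    fix z assume z: "z \<in> cube p a r"
    have "z i \<in> X i" for i
    proof (cases "i \<in> F")
      case True
      have "\<bar>z i - a i\<bar> \<le> r"
        using z assms(2) ST \<open>r > 0\<close> by (cases "i < p") (auto simp: cube_def topspace_Euclidean_space)
      moreover have "r \<le> R i" unfolding r_def using F True by (intro Min_le) auto
      ultimately have "z i \<in> cball (a i) (R i)" by (simp add: dist_real_def abs_minus_commute)
      then show ?thesis using R True by blast
    qed (auto simp: F_def)
    then show "z \<in> S" using z X(4) ST by (auto simp: cube_def topspace_Euclidean_space)
  qed
  ultimately show thesis using that by blast
qed

lemma openin_Euclidean_space_open_cube: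
  "openin (Euclidean_space p) {z \<in> topspace (Euclidean_space p). \<forall>l<p. \<bar>z l - c l\<bar> < r}"
proof -
  have "open {z::nat\<Rightarrow>real. \<forall>l\<in>{..<p}. z (id l) \<in> ball (c l) r}"
    by (rule product_topology_basis') auto
  then have "openin (powertop_real UNIV) {z. \<forall>l\<in>{..<p}. z (id l) \<in> ball (c l) r}"
    by (simp add: euclidean_product_topology)
  moreover have "{z \<in> topspace (Euclidean_space p). \<forall>l<p. \<bar>z l - c l\<bar> < r} =
        {z. \<forall>l\<in>{..<p}. z (id l) \<in> ball (c l) r} \<inter> {z. \<forall>i\<ge>p. z i = 0}"
    by (auto simp: topspace_Euclidean_space dist_real_def abs_minus_commute)
  ultimately show ?thesis unfolding Euclidean_space_def openin_subtopology by blast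
qed

lemma concat_vec_in_cube:
  "s \<in> cube n a r \<Longrightarrow> y \<in> cube m b r \<Longrightarrow> concat_vec n s y \<in> cube (n + m) (concat_vec n a b) r"
  by (auto simp: cube_def concat_vec_def topspace_Euclidean_space)

lemma concat_vec_restrict [simp]:
  "s \<in> topspace (Euclidean_space n) \<Longrightarrow> (\<lambda>i. if i < n then concat_vec n s y i else 0) = s"
  by (auto simp: concat_vec_def topspace_Euclidean_space)

lemma concat_vec_shift [simp]: "(\<lambda>i. concat_vec n s y (n + i)) = y"
  by (simp add: concat_vec_def)

lemma cube_concat_vec_cases:
  assumes "z \<in> cube (n + m) (concat_vec n a b) r"
  obtains s y where "s \<in> cube n a r" "y \<in> cube m b r" "z = concat_vec n s y"
proof
  let ?s = "\<lambda>i. if i < n then z i else 0" and ?y = "\<lambda>i. z (n + i)"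
  show "z = concat_vec n ?s ?y" by (auto simp: concat_vec_def)
  have z: "\<bar>z l - concat_vec n a b l\<bar> \<le> r" if "l < n + m" for l
    using assms that by (simp add: cube_def)
  have "\<bar>z l - a l\<bar> \<le> r" if "l < n" for l
    using z[of l] that by (simp add: concat_vec_def)
  then show "?s \<in> cube n a r" by (simp add: cube_def topspace_Euclidean_space)
  have "\<bar>z (n + l) - b l\<bar> \<le> r" if "l < m" for l
    using z[of "n + l"] that by (simp add: concat_vec_def)
  then show "?y \<in> cube m b r"
    using assms by (auto simp: cube_def topspace_Euclidean_space)
qed

lemma cube_concat_vec_subset:
  assumes "cube n a r1 \<subseteq> U" "cube m b r2 \<subseteq> Y"
  shows "cube (n + m) (concat_vec n a b) (min r1 r2) \<subseteq> {concat_vec n s y | s y. s \<in> U \<and> y \<in> Y}"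
proof
  fix z assume "z \<in> cube (n + m) (concat_vec n a b) (min r1 r2)"
  then obtain s y where "s \<in> cube n a (min r1 r2)" "y \<in> cube m b (min r1 r2)" "z = concat_vec n s y"
    by (rule cube_concat_vec_cases)
  moreover have "cube n a (min r1 r2) \<subseteq> cube n a r1" "cube m b (min r1 r2) \<subseteq> cube m b r2"
    by (simp_all add: cube_mono)
  ultimately show "z \<in> {concat_vec n s y | s y. s \<in> U \<and> y \<in> Y}" using assms by blast
qed

section \<open>Mean value estimates\<close>

lemma MVT_from_0:
  fixes h h' :: "real \<Rightarrow> real"
  assumes "\<And>t. min 0 d \<le> t \<Longrightarrow> t \<le> max 0 d \<Longrightarrow> DERIV h t :> h' t"
  obtains \<tau> where "min 0 d \<le> \<tau>" "\<tau> \<le> max 0 d" "h d - h 0 = d * h' \<tau>"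
proof (cases "0 < d")
  case True
  with MVT2[OF True, of h h'] assms obtain z where "0 < z" "z < d" "h d - h 0 = d * h' z"
    by auto
  with True show thesis by (intro that[of z]) auto
next
  case False
  show thesis
  proof (cases "d = 0")
    case False
    with \<open>\<not> 0 < d\<close> have d: "d < 0" by simp
    with MVT2[OF d, of h h'] assms obtain z where "d < z" "z < 0" "h 0 - h d = (0 - d) * h' z"
      by auto
    with d show thesis by (intro that[of z]) (auto simp: algebra_simps)
  qed (auto intro: that[of 0])
qed

lemma DERIV_partial_along_coordinate:
  assumes "partial_diffble f i k (w(k := w k + t))"
  shows "DERIV (\<lambda>t. f (w(k := w k + t)) i) t :> partial f i k (w(k := w k + t))"
proof -
  let ?c = "w(k := w k + t)"
  have "DERIV (\<lambda>t'. f (?c(k := ?c k + t')) i) 0 :> partial f i k ?c"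
    using assms unfolding partial_diffble_def partial_def
    by (simp add: DERIV_deriv_iff_real_differentiable)
  moreover have "(\<lambda>t'. f (?c(k := ?c k + t')) i) = (\<lambda>t'. f (w(k := w k + (t' + t))) i)"
    by (auto simp: algebra_simps)
  ultimately show ?thesis
    using DERIV_shift[of "\<lambda>t. f (w(k := w k + t)) i" _ 0 t] by simp
qed

lemma partial_concat_vec_first:
  assumes "j < n" "a \<in> topspace (Euclidean_space n)"
  shows "partial (\<lambda>z. F (\<lambda>l. if l < n then z l else 0) (\<lambda>l. z (n + l))) i j (concat_vec n a b)
       = partial (\<lambda>s. F s b) i j a"
proof -
  let ?z = "\<lambda>t. (concat_vec n a b)(j := concat_vec n a b j + t)"
  have restrict: "(\<lambda>l. if l < n then ?z t l else 0) = a(j := a j + t)"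
    and shift: "(\<lambda>l. ?z t (n + l)) = b" for t
    using assms by (auto simp: concat_vec_def topspace_Euclidean_space fun_eq_iff)
  show ?thesis unfolding partial_def by (simp only: restrict shift)
qed

lemma cube_mean_value_coordinate:
  assumes cube: "cube p c r \<subseteq> S" and diff: "\<forall>z\<in>S. partial_diffble f i k z" and k: "k < p"
    and w: "w \<in> cube p c r" and w': "w(k := w k + d) \<in> cube p c r"
  obtains \<xi> where "\<xi> \<in> cube p c r" "f (w(k := w k + d)) i - f w i = d * partial f i k \<xi>"
proof -
  let ?w = "\<lambda>t. w(k := w k + t)"
  have "\<bar>w k - c k\<bar> \<le> r" "\<bar>(w(k := w k + d)) k - c k\<bar> \<le> r"
    using w w' k unfolding cube_def by blast+
  then have ends: "\<bar>w k - c k\<bar> \<le> r" "\<bar>w k + d - c k\<bar> \<le> r" by simp_all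
  have w_cube: "?w t \<in> cube p c r" if "min 0 d \<le> t" "t \<le> max 0 d" for t
  proof -
    have "\<bar>w k + t - c k\<bar> \<le> r"
      using ends that by (auto simp: abs_le_iff min_def max_def split: if_splits)
    then show ?thesis using w k by (auto simp: cube_def topspace_Euclidean_space)
  qed
  obtain \<tau> where \<tau>: "min 0 d \<le> \<tau>" "\<tau> \<le> max 0 d"
    "f (?w d) i - f (?w 0) i = d * partial f i k (?w \<tau>)"
    by (rule MVT_from_0[of d "\<lambda>t. f (?w t) i"], rule DERIV_partial_along_coordinate)
       (use diff cube w_cube in blast)
  then show thesis using w_cube[OF \<tau>(1,2)] by (intro that[of "?w \<tau>"]) auto
qed

lemma cube_mean_value:
  assumes cube: "cube p c r \<subseteq> S"
    and diff: "\<forall>j<p. \<forall>z\<in>S. partial_diffble f i j z"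
    and a: "a \<in> cube p c r" and b: "b \<in> cube p c r"
  obtains \<xi> where "\<forall>j<p. \<xi> j \<in> cube p c r"
    and "f b i - f a i = (\<Sum>j<p. partial f i j (\<xi> j) * (b j - a j))"
proof -
  \<comment> \<open>Walk from a to b one coordinate at a time.\<close>
  define w where "w k = (\<lambda>l. if l < k then b l else a l)" for k
  have w_cube: "w k \<in> cube p c r" for k
    using a b by (auto simp: w_def cube_def topspace_Euclidean_space)
  have "\<exists>\<xi>. (\<forall>j<k. \<xi> j \<in> cube p c r) \<and>
      f (w k) i - f a i = (\<Sum>j<k. partial f i j (\<xi> j) * (b j - a j))" if "k \<le> p" for k
    using that
  proof (induction k)
    case 0
    then show ?case by (auto simp: w_def)
  next
    case (Suc k)
    then obtain \<xi> where \<xi>: "\<forall>j<k. \<xi> j \<in> cube p c r"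
      "f (w k) i - f a i = (\<Sum>j<k. partial f i j (\<xi> j) * (b j - a j))" by auto
    have k: "k < p" using Suc.prems by simp
    have step: "(w k)(k := w k k + (b k - a k)) = w (Suc k)" by (auto simp: w_def fun_eq_iff)
    have diff_k: "\<forall>z\<in>S. partial_diffble f i k z" using diff k by blast
    have "(w k)(k := w k k + (b k - a k)) \<in> cube p c r" using w_cube[of "Suc k"] step by simp
    then obtain \<zeta> where "\<zeta> \<in> cube p c r"
      "f ((w k)(k := w k k + (b k - a k))) i - f (w k) i = (b k - a k) * partial f i k \<zeta>"
      using cube_mean_value_coordinate[OF cube diff_k k w_cube[of k]] by blast
    then have \<zeta>: "\<zeta> \<in> cube p c r" "f (w (Suc k)) i - f (w k) i = (b k - a k) * partial f i k \<zeta>"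
      using step by simp_all
    have "f (w (Suc k)) i - f a i = (\<Sum>j<Suc k. partial f i j ((\<xi>(k := \<zeta>)) j) * (b j - a j))"
      using \<xi>(2) \<zeta>(2) by (simp add: algebra_simps)
    moreover have "\<forall>j<Suc k. (\<xi>(k := \<zeta>)) j \<in> cube p c r" using \<xi>(1) \<zeta>(1) by (simp add: less_Suc_eq)
    ultimately show ?case by blast
  qed
  moreover have "w p = b"
    using a b by (auto simp: w_def fun_eq_iff cube_def topspace_Euclidean_space)
  ultimately show thesis using that by auto
qed

lemma cube_linearization_error:
  assumes cube: "cube p c r \<subseteq> S"
    and diff: "\<forall>j<p. \<forall>z\<in>S. partial_diffble f i j z"
    and close: "\<forall>j<p. \<forall>z\<in>cube p c r. \<bar>partial f i j z - M j\<bar> \<le> \<eta>"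
    and a: "a \<in> cube p c r" and b: "b \<in> cube p c r" and d: "\<forall>j<p. \<bar>b j - a j\<bar> \<le> d"
  shows "\<bar>f b i - f a i - (\<Sum>j<p. M j * (b j - a j))\<bar> \<le> p * \<eta> * d"
proof -
  obtain \<xi> where \<xi>: "\<forall>j<p. \<xi> j \<in> cube p c r"
    and fba: "f b i - f a i = (\<Sum>j<p. partial f i j (\<xi> j) * (b j - a j))"
    using cube_mean_value[OF cube diff a b] by blast
  have "\<bar>f b i - f a i - (\<Sum>j<p. M j * (b j - a j))\<bar>
      = \<bar>\<Sum>j<p. (partial f i j (\<xi> j) - M j) * (b j - a j)\<bar>"
    unfolding fba by (simp add: sum_subtractf left_diff_distrib)
  also have "\<dots> \<le> (\<Sum>j<p. \<bar>partial f i j (\<xi> j) - M j\<bar> * \<bar>b j - a j\<bar>)"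
    unfolding abs_mult[symmetric] by (rule sum_abs)
  also have "\<dots> \<le> (\<Sum>j<p. \<eta> * d)"
    using close \<xi> d by (intro sum_mono mult_mono) (auto intro: order_trans[OF abs_ge_zero])
  finally show ?thesis by simp
qed

lemma finite_common_radius:
  fixes P :: "'a \<Rightarrow> real \<Rightarrow> bool"
  assumes "finite F" "\<forall>x\<in>F. \<exists>r>0. P x r"
    and "\<And>x r r'. P x r \<Longrightarrow> 0 < r' \<Longrightarrow> r' \<le> r \<Longrightarrow> P x r'"
  shows "\<exists>r>0. \<forall>x\<in>F. P x r"
  using assms(1,2)
proof (induction F rule: finite_induct)
  case empty
  show ?case by (auto intro: exI[of _ 1])
next
  case (insert x F)
  then obtain r1 r2 where "r1 > 0" "\<forall>x\<in>F. P x r1" "r2 > 0" "P x r2" by auto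
  with assms(3) show ?case by (intro exI[of _ "min r1 r2"]) auto
qed

lemma continuous_map_close_on_cube:
  assumes cont: "continuous_map (subtopology (Euclidean_space p) S) euclideanreal g"
    and S: "cube p z0 r0 \<subseteq> S" "0 < r0" and z0: "z0 \<in> topspace (Euclidean_space p)"
    and \<eta>: "0 < \<eta>"
  obtains r where "0 < r" "\<And>z. z \<in> cube p z0 r \<Longrightarrow> \<bar>g z - g z0\<bar> < \<eta>"
proof -
  let ?T = "subtopology (Euclidean_space p) S"
  let ?near = "{z \<in> topspace ?T. g z \<in> ball (g z0) \<eta>}"
  have z0S: "z0 \<in> S" using S(1) centre_in_cube[OF z0 less_imp_le[OF S(2)]] by blast
  have "openin ?T ?near" using cont by (rule openin_continuous_map_preimage) auto
  then obtain T where T: "openin (Euclidean_space p) T" and TS: "?near = T \<inter> S"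
    unfolding openin_subtopology by blast
  have "z0 \<in> ?near" using z0 z0S \<eta> by simp
  with TS have "z0 \<in> T" by blast
  then obtain r1 where r1: "0 < r1" "cube p z0 r1 \<subseteq> T"
    using openin_Euclidean_space_contains_cube[OF T] by blast
  have "cube p z0 (min r1 r0) \<subseteq> cube p z0 r1" "cube p z0 (min r1 r0) \<subseteq> cube p z0 r0"
    by (simp_all add: cube_mono)
  then have near: "cube p z0 (min r1 r0) \<subseteq> ?near" using r1(2) S(1) TS by blast
  have "\<bar>g z - g z0\<bar> < \<eta>" if "z \<in> cube p z0 (min r1 r0)" for z
    using subsetD[OF near that] by (simp add: dist_real_def abs_minus_commute)
  with r1(1) S(2) show thesis by (intro that[of "min r1 r0"]) auto
qed

lemma C1_on_partials_uniformly_close: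
  assumes C1: "C1_on p q S f" and S: "cube p z0 r0 \<subseteq> S" "0 < r0"
    and z0: "z0 \<in> topspace (Euclidean_space p)" and \<eta>: "0 < \<eta>"
  obtains r where "0 < r" "r \<le> r0"
    and "\<And>z i j. z \<in> cube p z0 r \<Longrightarrow> i < q \<Longrightarrow> j < p \<Longrightarrow> \<bar>partial f i j z - partial f i j z0\<bar> < \<eta>"
proof -
  define P where "P ij r \<longleftrightarrow>
    (\<forall>z\<in>cube p z0 r. \<bar>partial f (fst ij) (snd ij) z - partial f (fst ij) (snd ij) z0\<bar> < \<eta>)" for ij r
  have "\<exists>r>0. P ij r" if ij_range: "ij \<in> {..<q} \<times> {..<p}" for ij
  proof -
    obtain i j where ij: "ij = (i, j)" "i < q" "j < p" using ij_range by blast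
    then have cont: "continuous_map (subtopology (Euclidean_space p) S) euclideanreal (partial f i j)"
      using C1 unfolding C1_on_def by blast
    obtain r where "0 < r" "\<And>z. z \<in> cube p z0 r \<Longrightarrow> \<bar>partial f i j z - partial f i j z0\<bar> < \<eta>"
      using continuous_map_close_on_cube[OF cont S z0 \<eta>] by blast
    then show ?thesis unfolding P_def ij(1) by auto
  qed
  moreover have "P ij r'" if "P ij r" "0 < r'" "r' \<le> r" for ij r r'
    using that cube_mono[of r' r] unfolding P_def by (auto simp: subset_iff)
  ultimately obtain r where "0 < r" "\<forall>ij\<in>{..<q} \<times> {..<p}. P ij r"
    using finite_common_radius[of "{..<q} \<times> {..<p}" P] by blast
  moreover have "cube p z0 (min r r0) \<subseteq> cube p z0 r" by (simp add: cube_mono)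
  ultimately show thesis using S(2) by (intro that[of "min r r0"]) (auto simp: P_def)
qed

section \<open>Zeros of continuously differentiable maps\<close>

lemma C1_zeros_linearized:
  assumes cube: "cube (n + m) z0 r \<subseteq> S" and diff: "\<forall>j<n + m. \<forall>z\<in>S. partial_diffble f k j z"
    and close: "\<forall>j<n + m. \<forall>z\<in>cube (n + m) z0 r. \<bar>partial f k j z - M j\<bar> \<le> \<eta>"
    and bound: "\<forall>j<n + m. \<forall>z\<in>cube (n + m) z0 r. \<bar>partial f k j z - 0\<bar> \<le> B"
    and cubes: "concat_vec n s1 y1 \<in> cube (n + m) z0 r" "concat_vec n s1 y2 \<in> cube (n + m) z0 r"
      "concat_vec n s2 y2 \<in> cube (n + m) z0 r"
    and zeros: "f (concat_vec n s1 y1) k = 0" "f (concat_vec n s2 y2) k = 0"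
    and t: "0 \<le> t" "\<forall>j<m. \<bar>y1 j - y2 j\<bar> \<le> t" and D: "\<forall>j<n. \<bar>s1 j - s2 j\<bar> \<le> D" "0 \<le> D"
  shows "\<bar>\<Sum>j<n. M j * (s1 j - s2 j)\<bar> \<le> (n + m) * B * t + (n + m) * \<eta> * D"
proof -
  \<comment> \<open>(s1, y2) is compared with the zero (s2, y2) by linearization and with the zero (s1, y1) by the bound B.\<close>
  let ?za = "concat_vec n s1 y2" and ?zb = "concat_vec n s2 y2" and ?zc = "concat_vec n s1 y1"
  have "\<forall>j<n + m. \<bar>?za j - ?zb j\<bar> \<le> D" using D by (auto simp: concat_vec_def)
  then have lin: "\<bar>f ?za k - f ?zb k - (\<Sum>j<n + m. M j * (?za j - ?zb j))\<bar> \<le> (n + m) * \<eta> * D"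
    by (rule cube_linearization_error[OF cube diff close cubes(3,2)])
  have "(\<Sum>j<n + m. M j * (?za j - ?zb j)) = (\<Sum>j<n. M j * (?za j - ?zb j))"
    by (rule sum.mono_neutral_right) (auto simp: concat_vec_def)
  also have "\<dots> = (\<Sum>j<n. M j * (s1 j - s2 j))" by (simp add: concat_vec_def)
  finally have lin': "\<bar>f ?za k - f ?zb k - (\<Sum>j<n. M j * (s1 j - s2 j))\<bar> \<le> (n + m) * \<eta> * D"
    using lin by simp
  have "\<bar>?za j - ?zc j\<bar> \<le> t" if "j < n + m" for j
  proof (cases "j < n")
    case False
    then have "j - n < m" using that by simp
    then show ?thesis using t(2) False by (simp add: concat_vec_def abs_minus_commute)
  qed (simp add: concat_vec_def t(1))
  then have "\<forall>j<n + m. \<bar>?za j - ?zc j\<bar> \<le> t" by blast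
  then have "\<bar>f ?za k - f ?zc k - (\<Sum>j<n + m. 0 * (?za j - ?zc j))\<bar> \<le> (n + m) * B * t"
    by (rule cube_linearization_error[OF cube diff bound cubes(1,2)])
  with lin' zeros show ?thesis by simp
qed

lemma C1_zeros_Lipschitz_in_parameters:
  assumes C1: "C1_on (n + m) n S f" and S: "cube (n + m) z0 r0 \<subseteq> S" "0 < r0"
    and z0: "z0 = concat_vec n (\<lambda>_. 0) y0" and y0: "y0 \<in> topspace (Euclidean_space m)"
    and det: "det_n n (\<lambda>i j. partial f i j z0) \<noteq> 0"
  obtains r K where "0 < r" "0 < K"
    and "\<And>s1 s2 y1 y2 t i. s1 \<in> cube n (\<lambda>_. 0) r \<Longrightarrow> s2 \<in> cube n (\<lambda>_. 0) r \<Longrightarrow>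
           y1 \<in> cube m y0 r \<Longrightarrow> y2 \<in> cube m y0 r \<Longrightarrow>
           f (concat_vec n s1 y1) = (\<lambda>_. 0) \<Longrightarrow> f (concat_vec n s2 y2) = (\<lambda>_. 0) \<Longrightarrow>
           0 \<le> t \<Longrightarrow> \<forall>j<m. \<bar>y1 j - y2 j\<bar> \<le> t \<Longrightarrow> i < n \<Longrightarrow> \<bar>s1 i - s2 i\<bar> \<le> K * t"
proof -
  define M where "M i j = partial f i j z0" for i j
  obtain \<beta> where \<beta>: "0 < \<beta>"
    and inverse: "\<And>v T i. \<forall>k<n. \<bar>\<Sum>j<n. M k j * v j\<bar> \<le> T \<Longrightarrow> i < n \<Longrightarrow> \<bar>v i\<bar> \<le> \<beta> * T"
    using det_n_nonzero_bounded_inverse[OF det[folded M_def]] by blast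
  \<comment> \<open>\<eta> is chosen so that the linearization error \<beta> (n + m) \<eta> D can be absorbed into D below.\<close>
  define \<eta> where "\<eta> = 1 / (2 * \<beta> * (n + m + 1))"
  have "\<beta> * (n + m) * \<eta> = (n + m) / (2 * (n + m + 1))" using \<beta> by (simp add: \<eta>_def)
  also have "\<dots> \<le> 1 / 2" by (simp add: field_simps)
  finally have \<eta>: "0 < \<eta>" "\<beta> * (n + m) * \<eta> \<le> 1 / 2" using \<beta> by (auto simp: \<eta>_def)
  have z0_top: "z0 \<in> topspace (Euclidean_space (n + m))"
    using y0 by (auto simp: z0 concat_vec_def topspace_Euclidean_space)
  obtain r where r: "0 < r" "r \<le> r0" and close:
    "\<And>z i j. z \<in> cube (n + m) z0 r \<Longrightarrow> i < n \<Longrightarrow> j < n + m \<Longrightarrow> \<bar>partial f i j z - M i j\<bar> < \<eta>"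
    using C1_on_partials_uniformly_close[OF C1 S z0_top \<eta>(1)] unfolding M_def by blast
  have cube_S: "cube (n + m) z0 r \<subseteq> S" using S(1) cube_mono[OF r(2)] by blast
  define B where "B = (\<Sum>i<n. \<Sum>j<n + m. \<bar>M i j\<bar>) + \<eta>"
  have B: "\<bar>partial f i j z - 0\<bar> \<le> B" if "z \<in> cube (n + m) z0 r" "i < n" "j < n + m" for z i j
  proof -
    have "\<bar>M i j\<bar> \<le> (\<Sum>j<n + m. \<bar>M i j\<bar>)" using that(3) by (intro member_le_sum) auto
    also have "\<dots> \<le> (\<Sum>i<n. \<Sum>j<n + m. \<bar>M i j\<bar>)"
      using that(2) by (intro member_le_sum[of i "{..<n}"]) (auto intro: sum_nonneg)
    finally show ?thesis using close[OF that] unfolding B_def by linarith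
  qed
  have B0: "0 \<le> B" unfolding B_def by (intro add_nonneg_nonneg sum_nonneg) (use \<eta>(1) in auto)
  define K where "K = 2 * \<beta> * (n + m) * B + 1"
  show thesis
  proof (rule that[of r K])
    show "0 < r" by (fact r(1))
    have "0 \<le> 2 * \<beta> * (n + m) * B" using \<beta> B0 by (intro mult_nonneg_nonneg) auto
    then show "0 < K" unfolding K_def by linarith
  next
    fix s1 s2 y1 y2 t i
    assume s1: "s1 \<in> cube n (\<lambda>_. 0) r" and s2: "s2 \<in> cube n (\<lambda>_. 0) r"
      and y1: "y1 \<in> cube m y0 r" and y2: "y2 \<in> cube m y0 r"
      and zero1: "f (concat_vec n s1 y1) = (\<lambda>_. 0)" and zero2: "f (concat_vec n s2 y2) = (\<lambda>_. 0)"
      and t: "0 \<le> t" "\<forall>j<m. \<bar>y1 j - y2 j\<bar> \<le> t" and i: "i < n"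
    have cubes: "concat_vec n s1 y1 \<in> cube (n + m) z0 r" "concat_vec n s1 y2 \<in> cube (n + m) z0 r"
      "concat_vec n s2 y2 \<in> cube (n + m) z0 r"
      unfolding z0 using s1 s2 y1 y2 by (auto intro: concat_vec_in_cube)
    define D where "D = Max (insert 0 ((\<lambda>j. \<bar>s1 j - s2 j\<bar>) ` {..<n}))"
    have D: "\<forall>j<n. \<bar>s1 j - s2 j\<bar> \<le> D" "0 \<le> D" by (auto simp: D_def)
    have row: "\<bar>\<Sum>j<n. M k j * (s1 j - s2 j)\<bar> \<le> (n + m) * B * t + (n + m) * \<eta> * D"
      if k: "k < n" for k
    proof (rule C1_zeros_linearized[OF cube_S _ _ _ cubes _ _ t D])
      show "\<forall>j<n + m. \<forall>z\<in>S. partial_diffble f k j z" using C1 k unfolding C1_on_def by blast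
      show "\<forall>j<n + m. \<forall>z\<in>cube (n + m) z0 r. \<bar>partial f k j z - M k j\<bar> \<le> \<eta>"
        using close[OF _ k] by (auto intro: less_imp_le)
      show "\<forall>j<n + m. \<forall>z\<in>cube (n + m) z0 r. \<bar>partial f k j z - 0\<bar> \<le> B" using B[OF _ k] by blast
      show "f (concat_vec n s1 y1) k = 0" "f (concat_vec n s2 y2) k = 0" using zero1 zero2 by simp_all
    qed
    have "\<forall>j<n. \<bar>s1 j - s2 j\<bar> \<le> \<beta> * ((n + m) * B * t + (n + m) * \<eta> * D)"
      using inverse[of "\<lambda>j. s1 j - s2 j"] row by blast
    moreover have "0 \<le> \<beta> * ((n + m) * B * t + (n + m) * \<eta> * D)" using \<beta> B0 \<eta> t D by simp
    ultimately have "D \<le> \<beta> * ((n + m) * B * t + (n + m) * \<eta> * D)" by (auto simp: D_def)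
    also have "\<dots> = \<beta> * (n + m) * B * t + (\<beta> * (n + m) * \<eta>) * D" by (simp add: algebra_simps)
    also have "\<dots> \<le> \<beta> * (n + m) * B * t + D / 2" using mult_right_mono[OF \<eta>(2) D(2)] by simp
    finally have "D \<le> 2 * \<beta> * (n + m) * B * t" by simp
    also have "\<dots> \<le> K * t" using t by (simp add: K_def algebra_simps)
    finally show "\<bar>s1 i - s2 i\<bar> \<le> K * t" using D(1) i by force
  qed
qed

lemma card_le_cube_packing:
  fixes y :: "'a \<Rightarrow> nat \<Rightarrow> real"
  assumes t: "0 < t" and in_cube: "\<And>k. k \<in> I \<Longrightarrow> y k \<in> cube m c r"
    and separated: "\<And>k1 k2. k1 \<in> I \<Longrightarrow> k2 \<in> I \<Longrightarrow> \<forall>j<m. \<bar>y k1 j - y k2 j\<bar> \<le> t \<Longrightarrow> k1 = k2"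
  shows "card I \<le> (nat \<lfloor>2 * r / t\<rfloor> + 1) ^ m"
proof -
  \<comment> \<open>Sort the points into the boxes of side t of a grid covering the cube; each box holds at most one.\<close>
  define Q where "Q = nat \<lfloor>2 * r / t\<rfloor> + 1"
  define box where "box z = restrict (\<lambda>j. nat \<lfloor>(z j - c j + r) / t\<rfloor>) {..<m}" for z :: "nat \<Rightarrow> real"
  have offset: "0 \<le> y k j - c j + r" "y k j - c j + r \<le> 2 * r" if "k \<in> I" "j < m" for k j
    using in_cube[OF that(1)] that(2) unfolding cube_def by auto
  have maps: "(box \<circ> y) ` I \<subseteq> {..<m} \<rightarrow>\<^sub>E {..<Q}"
  proof (clarsimp simp: box_def)
    fix k j assume "k \<in> I" "j < m"
    then have "\<lfloor>(y k j - c j + r) / t\<rfloor> \<le> \<lfloor>2 * r / t\<rfloor>"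
      using offset t by (intro floor_mono divide_right_mono) auto
    then show "nat \<lfloor>(y k j - c j + r) / t\<rfloor> < Q" unfolding Q_def by linarith
  qed
  moreover have inj: "inj_on (box \<circ> y) I"
  proof (rule inj_onI)
    fix k1 k2 assume k: "k1 \<in> I" "k2 \<in> I" and eq: "(box \<circ> y) k1 = (box \<circ> y) k2"
    have "\<bar>y k1 j - y k2 j\<bar> \<le> t" if j: "j < m" for j
    proof -
      have "nat \<lfloor>(y k1 j - c j + r) / t\<rfloor> = nat \<lfloor>(y k2 j - c j + r) / t\<rfloor>"
        using fun_cong[OF eq, of j] j by (simp add: box_def)
      then have "\<lfloor>(y k1 j - c j + r) / t\<rfloor> = \<lfloor>(y k2 j - c j + r) / t\<rfloor>"
        using offset[OF k(1) j] offset[OF k(2) j] t by (simp add: nat_eq_iff2)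
      then have "\<bar>(y k1 j - c j + r) / t - (y k2 j - c j + r) / t\<bar> < 1"
        by (smt (verit) floor_eq_iff)
      then have "\<bar>y k1 j - y k2 j\<bar> < t"
        using t by (simp add: diff_divide_distrib[symmetric] abs_divide)
      then show ?thesis by simp
    qed
    then show "k1 = k2" using separated k by blast
  qed
  have "card I \<le> card ({..<m} \<rightarrow>\<^sub>E {..<Q})"
    by (rule card_inj_on_le[OF inj maps]) (simp add: finite_PiE)
  then show ?thesis by (simp add: card_PiE Q_def)
qed

lemma power_gt_scaled_lower_power:
  fixes c :: real
  assumes "m < n" "0 \<le> c"
  obtains N :: nat where "1 \<le> N" "(c * N) ^ m < real N ^ n"
proof
  define N where "N = nat \<lceil>c ^ m\<rceil> + 1"
  show N1: "1 \<le> N" by (simp add: N_def)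
  have "(c * N) ^ m = c ^ m * real N ^ m" by (simp add: power_mult_distrib)
  also have "\<dots> < real N * real N ^ m"
    using N1 by (intro mult_strict_right_mono) (auto simp: N_def, linarith)
  also have "\<dots> \<le> real N ^ n"
    using N1 assms(1) by (simp add: power_increasing flip: power_Suc)
  finally show "(c * N) ^ m < real N ^ n" .
qed

definition cube_grid :: "nat \<Rightarrow> real \<Rightarrow> nat \<Rightarrow> (nat \<Rightarrow> nat) \<Rightarrow> nat \<Rightarrow> real" where
  "cube_grid n e N k = (\<lambda>i. if i < n then e * k i / N else 0)"

lemma cube_grid_in_cube:
  assumes "0 < e" "k \<in> {..<n} \<rightarrow>\<^sub>E {..<N}"
  shows "cube_grid n e N k \<in> cube n (\<lambda>_. 0) e"
proof -
  have "e * k i / N \<le> e" if "i < n" for i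
  proof -
    have "k i < N" using assms(2) that by (auto simp: PiE_iff)
    then have "e * k i \<le> e * N" using assms(1) by (intro mult_left_mono) auto
    then show ?thesis using \<open>k i < N\<close> assms(1) by (simp add: divide_le_eq)
  qed
  then show ?thesis using assms(1) by (auto simp: cube_def cube_grid_def topspace_Euclidean_space)
qed

lemma cube_grid_separated:
  assumes "0 < e" "i < n" "k1 i \<noteq> k2 i"
  shows "e / N \<le> \<bar>cube_grid n e N k1 i - cube_grid n e N k2 i\<bar>"
proof -
  have "1 \<le> \<bar>real (k1 i) - real (k2 i)\<bar>" using assms(3) by linarith
  then have "e / N * 1 \<le> e / N * \<bar>real (k1 i) - real (k2 i)\<bar>"
    using assms(1) by (intro mult_left_mono) auto
  also have "\<dots> = \<bar>cube_grid n e N k1 i - cube_grid n e N k2 i\<bar>"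
    using assms(1,2)
    by (simp add: cube_grid_def abs_mult diff_divide_distrib[symmetric] right_diff_distrib[symmetric])
  finally show ?thesis by simp
qed

lemma no_coLipschitz_map_to_lower_dimension:
  fixes g :: "(nat \<Rightarrow> real) \<Rightarrow> nat \<Rightarrow> real"
  assumes mn: "m < n" and e: "0 < e" and K: "0 < K" and r: "0 \<le> r"
    and maps: "\<And>s. s \<in> cube n (\<lambda>_. 0) e \<Longrightarrow> g s \<in> cube m c r"
    and coLip: "\<And>s1 s2 t i. s1 \<in> cube n (\<lambda>_. 0) e \<Longrightarrow> s2 \<in> cube n (\<lambda>_. 0) e \<Longrightarrow> 0 < t \<Longrightarrow>
                  \<forall>j<m. \<bar>g s1 j - g s2 j\<bar> \<le> t \<Longrightarrow> i < n \<Longrightarrow> \<bar>s1 i - s2 i\<bar> \<le> K * t"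
  shows False
proof -
  \<comment> \<open>The N^n points of a grid of mesh e/N are mapped to points that are t-separated, t = e/(2KN),
    but only about (4rK N/e)^m such points fit into the cube of side 2r.\<close>
  define C where "C = 4 * r * K / e + 1"
  obtain N :: nat where N: "1 \<le> N" and NC: "(C * N) ^ m < real N ^ n"
    using power_gt_scaled_lower_power[OF mn, of C] r K e by (auto simp: C_def)
  define t where "t = e / (2 * K * N)"
  have t: "0 < t" using e K N by (simp add: t_def)
  define Q where "Q = nat \<lfloor>2 * r / t\<rfloor> + 1"
  have "card ({..<n} \<rightarrow>\<^sub>E {..<N}) \<le> Q ^ m"
    unfolding Q_def
  proof (rule card_le_cube_packing[OF t])
    show "g (cube_grid n e N k) \<in> cube m c r" if "k \<in> {..<n} \<rightarrow>\<^sub>E {..<N}" for k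
      using maps cube_grid_in_cube[OF e that] by blast
  next
    fix k1 k2 assume k: "k1 \<in> {..<n} \<rightarrow>\<^sub>E {..<N}" "k2 \<in> {..<n} \<rightarrow>\<^sub>E {..<N}"
      and close: "\<forall>j<m. \<bar>g (cube_grid n e N k1) j - g (cube_grid n e N k2) j\<bar> \<le> t"
    have "k1 i = k2 i" if i: "i < n" for i
    proof (rule ccontr)
      assume "k1 i \<noteq> k2 i"
      then have "e / N \<le> \<bar>cube_grid n e N k1 i - cube_grid n e N k2 i\<bar>"
        by (rule cube_grid_separated[OF e i])
      also have "\<dots> \<le> K * t"
        using coLip[OF cube_grid_in_cube[OF e k(1)] cube_grid_in_cube[OF e k(2)] t close i] .
      also have "\<dots> = e / (2 * N)" using K by (simp add: t_def)
      finally show False using e N by (simp add: field_simps)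
    qed
    then show "k1 = k2" using k by (intro PiE_ext) auto
  qed
  then have "N ^ n \<le> Q ^ m" by (simp add: card_PiE)
  then have "real N ^ n \<le> real Q ^ m" by (metis of_nat_le_iff of_nat_power)
  also have "\<dots> \<le> (C * N) ^ m"
  proof (rule power_mono)
    have "real Q \<le> 2 * r / t + 1" unfolding Q_def using r t by simp
    moreover have "2 * r / t = 4 * r * K * N / e" using e K N by (simp add: t_def field_simps)
    moreover have "4 * r * K * N / e + 1 \<le> C * N" using N by (simp add: C_def field_simps)
    ultimately show "real Q \<le> C * N" by linarith
  qed simp
  finally show False using NC by simp
qed

lemma C1_zeros_avoidable:
  assumes C1: "C1_on (n + m) n S f" and S: "cube (n + m) z0 r0 \<subseteq> S" "0 < r0"
    and z0: "z0 = concat_vec n (\<lambda>_. 0) y0" and y0: "y0 \<in> topspace (Euclidean_space m)"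
    and det: "det_n n (\<lambda>i j. partial f i j z0) \<noteq> 0" and mn: "m < n"
  obtains r where "0 < r"
    and "\<And>\<epsilon>. 0 < \<epsilon> \<Longrightarrow> \<exists>s\<in>cube n (\<lambda>_. 0) \<epsilon>. \<forall>y\<in>cube m y0 r. f (concat_vec n s y) \<noteq> (\<lambda>_. 0)"
proof -
  obtain r K where r: "0 < r" and K: "0 < K"
    and Lip: "\<And>s1 s2 y1 y2 t i. s1 \<in> cube n (\<lambda>_. 0) r \<Longrightarrow> s2 \<in> cube n (\<lambda>_. 0) r \<Longrightarrow>
           y1 \<in> cube m y0 r \<Longrightarrow> y2 \<in> cube m y0 r \<Longrightarrow>
           f (concat_vec n s1 y1) = (\<lambda>_. 0) \<Longrightarrow> f (concat_vec n s2 y2) = (\<lambda>_. 0) \<Longrightarrow>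
           0 \<le> t \<Longrightarrow> \<forall>j<m. \<bar>y1 j - y2 j\<bar> \<le> t \<Longrightarrow> i < n \<Longrightarrow> \<bar>s1 i - s2 i\<bar> \<le> K * t"
    using C1_zeros_Lipschitz_in_parameters[OF C1 S z0 y0 det] by blast
  show thesis
  proof (rule that[OF r], rule ccontr)
    fix \<epsilon> :: real assume "0 < \<epsilon>"
      and "\<not> (\<exists>s\<in>cube n (\<lambda>_. 0) \<epsilon>. \<forall>y\<in>cube m y0 r. f (concat_vec n s y) \<noteq> (\<lambda>_. 0))"
    moreover have "cube n (\<lambda>_. 0) (min \<epsilon> r) \<subseteq> cube n (\<lambda>_. 0) \<epsilon>" by (simp add: cube_mono)
    ultimately have "\<exists>y\<in>cube m y0 r. f (concat_vec n s y) = (\<lambda>_. 0)"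
      if "s \<in> cube n (\<lambda>_. 0) (min \<epsilon> r)" for s
      using that by blast
    then obtain g where g: "\<And>s. s \<in> cube n (\<lambda>_. 0) (min \<epsilon> r) \<Longrightarrow>
        g s \<in> cube m y0 r \<and> f (concat_vec n s (g s)) = (\<lambda>_. 0)"
      by metis
    have small: "cube n (\<lambda>_. 0) (min \<epsilon> r) \<subseteq> cube n (\<lambda>_. 0) r" by (simp add: cube_mono)
    show False
    proof (rule no_coLipschitz_map_to_lower_dimension[OF mn _ K less_imp_le[OF r]])
      show "0 < min \<epsilon> r" using \<open>0 < \<epsilon>\<close> r by simp
      show "g s \<in> cube m y0 r" if "s \<in> cube n (\<lambda>_. 0) (min \<epsilon> r)" for s
        using g that by blast
      show "\<bar>s1 i - s2 i\<bar> \<le> K * t"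
        if "s1 \<in> cube n (\<lambda>_. 0) (min \<epsilon> r)" "s2 \<in> cube n (\<lambda>_. 0) (min \<epsilon> r)" "0 < t"
          "\<forall>j<m. \<bar>g s1 j - g s2 j\<bar> \<le> t" "i < n" for s1 s2 t i
        using Lip[of s1 s2 "g s1" "g s2" t i] g[OF that(1)] g[OF that(2)] small that by auto
    qed
  qed
qed

section \<open>Charts\<close>

lemma chart_inj_on:
  assumes "chart X m (W, \<phi>)"
  shows "inj_on \<phi> W"
proof -
  have "W \<subseteq> topspace X"
    and hom: "homeomorphic_map (subtopology X W) (subtopology (Euclidean_space m) (\<phi> ` W)) \<phi>"
    using assms unfolding chart_def by (auto dest: openin_subset)
  then show ?thesis using homeomorphic_imp_injective_map[OF hom] by (simp add: Int_absorb1)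
qed

lemma chart_in_Euclidean_space: "chart X m (W, \<phi>) \<Longrightarrow> x \<in> W \<Longrightarrow> \<phi> x \<in> topspace (Euclidean_space m)"
  unfolding chart_def by (auto dest: openin_subset)

lemma chart_openin_image:
  assumes chart: "chart X m (W, \<phi>)" and V: "openin X V"
  shows "openin (Euclidean_space m) (\<phi> ` (V \<inter> W))"
proof -
  have W: "openin X W" and \<phi>W: "openin (Euclidean_space m) (\<phi> ` W)"
    and hom: "homeomorphic_map (subtopology X W) (subtopology (Euclidean_space m) (\<phi> ` W)) \<phi>"
    using chart unfolding chart_def by auto
  have "openin (subtopology X W) (V \<inter> W)"
    unfolding openin_subtopology using V by blast
  moreover have "V \<inter> W \<subseteq> topspace (subtopology X W)"
    using openin_subset[OF V] by auto
  ultimately have "openin (subtopology (Euclidean_space m) (\<phi> ` W)) (\<phi> ` (V \<inter> W))"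
    using homeomorphic_map_openness[OF hom] by blast
  then show ?thesis using openin_trans_full \<phi>W by blast
qed

lemma chart_openin_preimage:
  assumes chart: "chart X m (W, \<phi>)" and V: "openin X V" and Y: "openin (Euclidean_space m) Y"
  shows "openin X {x \<in> V \<inter> W. \<phi> x \<in> Y}"
proof -
  have W: "openin X W"
    and hom: "homeomorphic_map (subtopology X W) (subtopology (Euclidean_space m) (\<phi> ` W)) \<phi>"
    using chart unfolding chart_def by auto
  have "continuous_map (subtopology X W) (Euclidean_space m) \<phi>"
    using homeomorphic_imp_continuous_map[OF hom] continuous_map_in_subtopology by blast
  then have "openin (subtopology X W) {x \<in> topspace (subtopology X W). \<phi> x \<in> Y}"
    using Y by (rule openin_continuous_map_preimage)
  then have "openin X (V \<inter> {x \<in> topspace (subtopology X W). \<phi> x \<in> Y})"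
    using openin_trans_full[OF _ W] V by blast
  moreover have "V \<inter> {x \<in> topspace (subtopology X W). \<phi> x \<in> Y} = {x \<in> V \<inter> W. \<phi> x \<in> Y}"
    using openin_subset[OF V] by auto
  ultimately show ?thesis by simp
qed

lemma C1_atlas_chart_at:
  assumes "C1_atlas X m A" "x \<in> topspace X"
  obtains W \<phi> where "(W, \<phi>) \<in> A" "chart X m (W, \<phi>)" "x \<in> W"
proof -
  obtain c where c: "c \<in> A" "x \<in> fst c" using assms unfolding C1_atlas_def by blast
  moreover have "chart X m c" using assms(1) c(1) unfolding C1_atlas_def by blast
  ultimately show thesis using that[of "fst c" "snd c"] by simp
qed

lemma C1_atlas_imp_locally_compact_space:
  assumes "C1_atlas X m A"
  shows "locally_compact_space X"
  unfolding locally_compact_space_def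
proof
  fix x assume x: "x \<in> topspace X"
  then obtain W \<phi> where "chart X m (W, \<phi>)" "x \<in> W" by (rule C1_atlas_chart_at[OF assms])
  then have W: "openin X W" and \<phi>W: "openin (Euclidean_space m) (\<phi> ` W)"
    and hom: "homeomorphic_map (subtopology X W) (subtopology (Euclidean_space m) (\<phi> ` W)) \<phi>"
    unfolding chart_def by auto
  have "locally_compact_space (subtopology (Euclidean_space m) (\<phi> ` W))"
    by (rule locally_compact_space_open_subset[OF _ locally_compact_Euclidean_space \<phi>W])
       (simp add: Hausdorff_Euclidean_space)
  then have "locally_compact_space (subtopology X W)"
    using homeomorphic_locally_compact_space[OF homeomorphic_map_imp_homeomorphic_space[OF hom]]
    by blast
  moreover have "x \<in> topspace (subtopology X W)" using x \<open>x \<in> W\<close> by simp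
  ultimately obtain U K where UK: "openin (subtopology X W) U" "compactin (subtopology X W) K"
    "x \<in> U" "U \<subseteq> K"
    unfolding locally_compact_space_def by blast
  then show "\<exists>U K. openin X U \<and> compactin X K \<and> x \<in> U \<and> U \<subseteq> K"
    using openin_trans_full[OF UK(1) W] compactin_subtopology by blast
qed

lemma countable_compact_neighbourhoods:
  assumes sc: "second_countable X" and lc: "locally_compact_space X" and Haus: "Hausdorff_space X"
  obtains \<L> where "countable \<L>" "\<And>L. L \<in> \<L> \<Longrightarrow> compactin X L"
    and "\<And>x N. openin X N \<Longrightarrow> x \<in> N \<Longrightarrow> \<exists>L\<in>\<L>. x \<in> L \<and> L \<subseteq> N"
proof -
  have nb: "neighbourhood_base_of (compactin X) X"
    using locally_compact_space_neighbourhood_base Haus lc by blast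
  obtain \<B> where \<B>: "countable \<B>" "\<forall>B\<in>\<B>. openin X B"
    "\<forall>U x. openin X U \<and> x \<in> U \<longrightarrow> (\<exists>B\<in>\<B>. x \<in> B \<and> B \<subseteq> U)"
    using sc unfolding second_countable_def by blast
  define Idx where "Idx = {(B1, B2). B1 \<in> \<B> \<and> B2 \<in> \<B> \<and> (\<exists>L. compactin X L \<and> B1 \<subseteq> L \<and> L \<subseteq> B2)}"
  define pick where "pick = (\<lambda>(B1, B2). SOME L. compactin X L \<and> B1 \<subseteq> L \<and> L \<subseteq> B2)"
  have pick: "compactin X (pick (B1, B2)) \<and> B1 \<subseteq> pick (B1, B2) \<and> pick (B1, B2) \<subseteq> B2"
    if "(B1, B2) \<in> Idx" for B1 B2
  proof -
    from that have "\<exists>L. compactin X L \<and> B1 \<subseteq> L \<and> L \<subseteq> B2" by (simp add: Idx_def)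
    from someI_ex[OF this] show ?thesis by (simp add: pick_def)
  qed
  show thesis
  proof (rule that[of "pick ` Idx"])
    have "Idx \<subseteq> \<B> \<times> \<B>" by (auto simp: Idx_def)
    moreover have "countable (\<B> \<times> \<B>)" using \<B>(1) by simp
    ultimately have "countable Idx" by (rule countable_subset)
    then show "countable (pick ` Idx)" by simp
    show "compactin X L" if L: "L \<in> pick ` Idx" for L
    proof -
      obtain b where b: "b \<in> Idx" "L = pick b" using L by blast
      obtain B1 B2 where "b = (B1, B2)" by (cases b)
      then show ?thesis using pick b by simp
    qed
  next
    fix x N assume N: "openin X N" "x \<in> N"
    obtain B2 where B2: "B2 \<in> \<B>" "x \<in> B2" "B2 \<subseteq> N"
      using \<B>(3)[rule_format, OF conjI[OF N]] by blast
    have "openin X B2" using B2(1) \<B>(2) by blast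
    then obtain U K where UK: "openin X U" "compactin X K" "x \<in> U" "U \<subseteq> K" "K \<subseteq> B2"
      using nb[unfolded neighbourhood_base_of, rule_format, OF conjI, of B2 x] B2(2) by blast
    obtain B1 where B1: "B1 \<in> \<B>" "x \<in> B1" "B1 \<subseteq> U"
      using \<B>(3)[rule_format, OF conjI[OF UK(1,3)]] by blast
    have "\<exists>L. compactin X L \<and> B1 \<subseteq> L \<and> L \<subseteq> B2" using B1(3) UK by blast
    then have "(B1, B2) \<in> Idx" using B1(1) B2(1) by (simp add: Idx_def)
    then show "\<exists>L\<in>pick ` Idx. x \<in> L \<and> L \<subseteq> N"
      using pick[OF \<open>(B1, B2) \<in> Idx\<close>] B1(2) B2(3) by blast
  qed
qed

section \<open>Projections and Baire category\<close>

definition proj_over :: "'g topology \<Rightarrow> ('g \<times> 'x) set \<Rightarrow> 'x set \<Rightarrow> 'g set" where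
  "proj_over G H K = {g \<in> topspace G. \<exists>x\<in>K. (g, x) \<in> H}"

lemma proj_over_mono: "K \<subseteq> K' \<Longrightarrow> proj_over G H K \<subseteq> proj_over G H K'"
  unfolding proj_over_def by blast

lemma closedin_proj_over:
  assumes H: "closedin (prod_topology G X) H" and K: "compactin X K"
  shows "closedin G (proj_over G H K)"
proof -
  have "closedin (subtopology (prod_topology G X) (topspace G \<times> K)) (H \<inter> (topspace G \<times> K))"
    unfolding closedin_subtopology using H by blast
  then have "closedin (prod_topology G (subtopology X K)) (H \<inter> (topspace G \<times> K))"
    by (simp add: prod_topology_subtopology(2))
  moreover have "closed_map (prod_topology G (subtopology X K)) G fst"
    by (rule closed_map_fst) (rule compact_space_subtopology[OF K])
  ultimately have "closedin G (fst ` (H \<inter> (topspace G \<times> K)))"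
    unfolding closed_map_def by blast
  moreover have "fst ` (H \<inter> (topspace G \<times> K)) = proj_over G H K"
    unfolding proj_over_def by force
  ultimately show ?thesis by simp
qed

lemma Baire_space_point_in_interiors:
  assumes Baire: "Baire_space G" and I: "countable I" and C: "\<And>i. i \<in> I \<Longrightarrow> closedin G (C i)"
    and T: "openin G T" "T \<noteq> {}"
  obtains g where "g \<in> T" "\<And>i. i \<in> I \<Longrightarrow> g \<in> C i \<Longrightarrow> g \<in> G interior_of C i"
proof -
  \<comment> \<open>The boundary of a closed set is closed and nowhere dense, so its complement is open and dense.\<close>
  define D where "D i = topspace G - (C i - G interior_of C i)" for i
  have "openin G (D i)" if "i \<in> I" for i
    unfolding D_def using C[OF that] by (intro openin_diff closedin_diff) auto
  moreover have "G closure_of D i = topspace G" for i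
  proof -
    have "G interior_of (C i - G interior_of C i) \<subseteq> G interior_of C i"
      by (rule interior_of_mono) blast
    then have "G interior_of (C i - G interior_of C i) = {}"
      using interior_of_subset[of G "C i - G interior_of C i"] by blast
    then show ?thesis unfolding D_def closure_of_complement by simp
  qed
  ultimately have "G closure_of (topspace G \<inter> \<Inter>(D ` I)) = topspace G"
    using Baire I unfolding Baire_space_def by simp
  from this[unfolded dense_intersects_open, rule_format, OF conjI[OF T]]
  obtain g where "g \<in> T" "\<forall>i\<in>I. g \<in> D i" by blast
  then show thesis by (intro that) (auto simp: D_def)
qed

section \<open>Slices\<close>

lemma slice_zeros_avoidable_in_chart:
  assumes slice: "slice_across G X m A H g0 x0 n U V \<Phi>" and mn: "m < n"
    and c: "(W, \<phi>) \<in> A" and chart: "chart X m (W, \<phi>)" and x0W: "x0 \<in> W"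
  obtains r where "0 < r"
    and "\<And>\<epsilon>. 0 < \<epsilon> \<Longrightarrow> \<exists>s\<in>U. (\<forall>i<n. \<bar>s i\<bar> < \<epsilon>) \<and>
                          (\<forall>x\<in>V \<inter> W. \<phi> x \<in> cube m (\<phi> x0) r \<longrightarrow> \<Phi> s x \<noteq> (\<lambda>_. 0))"
proof -
  have U: "openin (Euclidean_space n) U" and U0: "(\<lambda>_. 0) \<in> U" and V: "openin X V" and x0V: "x0 \<in> V"
    and C1: "C1_on_prod X m A n n U V \<Phi>"
    and det: "det_n n (\<lambda>i j. partial (\<lambda>s. \<Phi> s x0) i j (\<lambda>_. 0)) \<noteq> 0"
    using slice unfolding slice_across_def by blast+
  define y0 where "y0 = \<phi> x0"
  have y0: "y0 \<in> topspace (Euclidean_space m)" "y0 \<in> \<phi> ` (V \<inter> W)"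
    using chart_in_Euclidean_space[OF chart x0W] x0V x0W by (auto simp: y0_def)
  obtain rV where rV: "0 < rV" "cube m y0 rV \<subseteq> \<phi> ` (V \<inter> W)"
    using openin_Euclidean_space_contains_cube[OF chart_openin_image[OF chart V] y0(2)] by blast
  obtain rU where rU: "0 < rU" "cube n (\<lambda>_. 0) rU \<subseteq> U"
    using openin_Euclidean_space_contains_cube[OF U U0] by blast
  define f where "f = (\<lambda>z. \<Phi> (\<lambda>l. if l < n then z l else 0) (inv_into W \<phi> (\<lambda>l. z (n + l))))"
  define z0 where "z0 = concat_vec n (\<lambda>_. 0) y0"
  have f_C1: "C1_on (n + m) n {concat_vec n s y | s y. s \<in> U \<and> y \<in> \<phi> ` (V \<inter> W)} f"
    using bspec[OF C1[unfolded C1_on_prod_def] c] unfolding f_def by simp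
  have cube_S: "cube (n + m) z0 (min rU rV) \<subseteq> {concat_vec n s y | s y. s \<in> U \<and> y \<in> \<phi> ` (V \<inter> W)}"
    unfolding z0_def by (rule cube_concat_vec_subset[OF rU(2) rV(2)])
  have inv0: "inv_into W \<phi> y0 = x0" using chart_inj_on[OF chart] x0W by (simp add: y0_def)
  have zero: "(\<lambda>_. 0) \<in> topspace (Euclidean_space n)" by (simp add: topspace_Euclidean_space)
  have "partial f i j z0 = partial (\<lambda>s. \<Phi> s x0) i j (\<lambda>_. 0)" if "j < n" for i j
    using partial_concat_vec_first[where F = "\<lambda>s y. \<Phi> s (inv_into W \<phi> y)" and b = y0, OF that zero]
    by (simp add: f_def z0_def inv0)
  then have "det_n n (\<lambda>i j. partial f i j z0) = det_n n (\<lambda>i j. partial (\<lambda>s. \<Phi> s x0) i j (\<lambda>_. 0))"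
    by (intro det_n_cong) simp
  with det have det_f: "det_n n (\<lambda>i j. partial f i j z0) \<noteq> 0" by simp
  obtain r where r: "0 < r"
    and avoid: "\<And>\<epsilon>. 0 < \<epsilon> \<Longrightarrow> \<exists>s\<in>cube n (\<lambda>_. 0) \<epsilon>. \<forall>y\<in>cube m y0 r. f (concat_vec n s y) \<noteq> (\<lambda>_. 0)"
    using C1_zeros_avoidable[OF f_C1 cube_S _ z0_def y0(1) det_f mn] rU(1) rV(1) by auto
  show thesis
  proof (rule that[OF r])
    fix \<epsilon> :: real assume "0 < \<epsilon>"
    then obtain s where s: "s \<in> cube n (\<lambda>_. 0) (min (\<epsilon> / 2) rU)"
      and s_avoid: "\<forall>y\<in>cube m y0 r. f (concat_vec n s y) \<noteq> (\<lambda>_. 0)"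
      using avoid[of "min (\<epsilon> / 2) rU"] rU(1) by auto
    have "cube n (\<lambda>_. 0) (min (\<epsilon> / 2) rU) \<subseteq> cube n (\<lambda>_. 0) rU" by (simp add: cube_mono)
    then have "s \<in> U" using s rU(2) by blast
    moreover have "\<forall>i<n. \<bar>s i\<bar> < \<epsilon>" using s \<open>0 < \<epsilon>\<close> by (force simp: cube_def)
    moreover have "\<Phi> s x \<noteq> (\<lambda>_. 0)" if "x \<in> V \<inter> W" "\<phi> x \<in> cube m (\<phi> x0) r" for x
    proof -
      have "f (concat_vec n s (\<phi> x)) = \<Phi> s x"
        using s chart_inj_on[OF chart] that(1) by (simp add: f_def cube_def)
      then show ?thesis using s_avoid that(2) by (auto simp: y0_def)
    qed
    ultimately show "\<exists>s\<in>U. (\<forall>i<n. \<bar>s i\<bar> < \<epsilon>) \<and>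
        (\<forall>x\<in>V \<inter> W. \<phi> x \<in> cube m (\<phi> x0) r \<longrightarrow> \<Phi> s x \<noteq> (\<lambda>_. 0))" by blast
  qed
qed

lemma slice_nonvanishing_near_point:
  assumes atlas: "C1_atlas X m A" and slice: "slice_across G X m A H g0 x0 n U V \<Phi>" and mn: "m < n"
  obtains N where "openin X N" "x0 \<in> N" "N \<subseteq> V"
    and "\<And>\<epsilon>. 0 < \<epsilon> \<Longrightarrow> \<exists>s\<in>U. (\<forall>i<n. \<bar>s i\<bar> < \<epsilon>) \<and> (\<forall>x\<in>N. \<Phi> s x \<noteq> (\<lambda>_. 0))"
proof -
  have V: "openin X V" and x0V: "x0 \<in> V" using slice unfolding slice_across_def by blast+
  obtain W \<phi> where c: "(W, \<phi>) \<in> A" and chart: "chart X m (W, \<phi>)" and x0W: "x0 \<in> W"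
    using C1_atlas_chart_at[OF atlas] openin_subset[OF V] x0V by blast
  obtain r where r: "0 < r"
    and avoid: "\<And>\<epsilon>. 0 < \<epsilon> \<Longrightarrow> \<exists>s\<in>U. (\<forall>i<n. \<bar>s i\<bar> < \<epsilon>) \<and>
                          (\<forall>x\<in>V \<inter> W. \<phi> x \<in> cube m (\<phi> x0) r \<longrightarrow> \<Phi> s x \<noteq> (\<lambda>_. 0))"
    using slice_zeros_avoidable_in_chart[OF slice mn c chart x0W] by blast
  define N where "N = {x \<in> V \<inter> W. \<phi> x \<in> {y \<in> topspace (Euclidean_space m). \<forall>j<m. \<bar>y j - \<phi> x0 j\<bar> < r}}"
  show thesis
  proof (rule that[of N])
    show "openin X N"
      unfolding N_def by (rule chart_openin_preimage[OF chart V openin_Euclidean_space_open_cube])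
    show "x0 \<in> N" using x0V x0W chart_in_Euclidean_space[OF chart x0W] r by (simp add: N_def)
    show "N \<subseteq> V" by (auto simp: N_def)
  next
    fix \<epsilon> :: real assume "0 < \<epsilon>"
    then obtain s where "s \<in> U" "\<forall>i<n. \<bar>s i\<bar> < \<epsilon>"
      "\<forall>x\<in>V \<inter> W. \<phi> x \<in> cube m (\<phi> x0) r \<longrightarrow> \<Phi> s x \<noteq> (\<lambda>_. 0)"
      using avoid by blast
    moreover have "x \<in> V \<inter> W \<and> \<phi> x \<in> cube m (\<phi> x0) r" if "x \<in> N" for x
      using that by (auto simp: N_def cube_def)
    ultimately show "\<exists>s\<in>U. (\<forall>i<n. \<bar>s i\<bar> < \<epsilon>) \<and> (\<forall>x\<in>N. \<Phi> s x \<noteq> (\<lambda>_. 0))" by blast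
  qed
qed

lemma slice_projection_not_interior:
  assumes slice: "slice_across G X m A H g0 x0 n U V \<Phi>" and NV: "N \<subseteq> V"
    and nonvanishing: "\<And>\<epsilon>. 0 < \<epsilon> \<Longrightarrow> \<exists>s\<in>U. (\<forall>i<n. \<bar>s i\<bar> < \<epsilon>) \<and> (\<forall>x\<in>N. \<Phi> s x \<noteq> (\<lambda>_. 0))"
  shows "g0 \<notin> G interior_of proj_over G H N"
proof
  assume g0: "g0 \<in> G interior_of proj_over G H N"
  have U: "openin (Euclidean_space n) U" and U0: "(\<lambda>_. 0) \<in> U"
    using slice unfolding slice_across_def by blast+
  obtain \<rho> \<pi> where \<rho>: "continuous_map (subtopology (Euclidean_space n) U) G \<rho>" "\<rho> (\<lambda>_. 0) = g0"
    and \<pi>0: "\<forall>g x. (g, x) \<in> H \<inter> (\<rho> ` U \<times> V) \<longrightarrow> \<pi> g x = (\<lambda>_. 0)"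
    and \<Phi>\<pi>: "\<forall>s\<in>U. \<forall>x\<in>V. \<Phi> s x = \<pi> (\<rho> s) x"
    using slice unfolding slice_across_def by blast
  let ?E = "subtopology (Euclidean_space n) U"
  let ?R = "{s \<in> topspace ?E. \<rho> s \<in> G interior_of proj_over G H N}"
  have "openin ?E ?R" by (rule openin_continuous_map_preimage[OF \<rho>(1)]) simp
  then have "openin (Euclidean_space n) ?R" using openin_trans_full U by blast
  moreover have "(\<lambda>_. 0) \<in> ?R" using U0 openin_subset[OF U] \<rho>(2) g0 by auto
  ultimately obtain \<delta> where \<delta>: "0 < \<delta>" "cube n (\<lambda>_. 0) \<delta> \<subseteq> ?R"
    by (rule openin_Euclidean_space_contains_cube)
  obtain s where s: "s \<in> U" "\<forall>i<n. \<bar>s i\<bar> < \<delta>" "\<forall>x\<in>N. \<Phi> s x \<noteq> (\<lambda>_. 0)"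
    using nonvanishing[OF \<delta>(1)] by blast
  then have "s \<in> cube n (\<lambda>_. 0) \<delta>" using openin_subset[OF U] by (auto simp: cube_def less_imp_le)
  then have "\<rho> s \<in> G interior_of proj_over G H N" using \<delta>(2) by blast
  then have "\<rho> s \<in> proj_over G H N" by (meson interior_of_subset subsetD)
  then obtain x where x: "x \<in> N" "(\<rho> s, x) \<in> H" by (auto simp: proj_over_def)
  then have "(\<rho> s, x) \<in> H \<inter> (\<rho> ` U \<times> V)" using s(1) NV by blast
  then have "\<Phi> s x = (\<lambda>_. 0)" using \<pi>0 \<Phi>\<pi> s(1) NV x(1) by auto
  with s(3) x(1) show False by blast
qed

lemma slice_imp_not_interior_proj_over:
  assumes "C1_atlas X m A" "has_slice G X m A H g0 x0 n" "m < n"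
  obtains N where "openin X N" "x0 \<in> N" "g0 \<notin> G interior_of proj_over G H N"
proof -
  obtain U V \<Phi> where slice: "slice_across G X m A H g0 x0 n U V \<Phi>"
    using assms(2) unfolding has_slice_def by blast
  obtain N where N: "openin X N" "x0 \<in> N" "N \<subseteq> V"
    and nonvanishing: "\<And>\<epsilon>. 0 < \<epsilon> \<Longrightarrow> \<exists>s\<in>U. (\<forall>i<n. \<bar>s i\<bar> < \<epsilon>) \<and> (\<forall>x\<in>N. \<Phi> s x \<noteq> (\<lambda>_. 0))"
    using slice_nonvanishing_near_point[OF assms(1) slice assms(3)] by blast
  show thesis by (rule that[OF N(1,2) slice_projection_not_interior[OF slice N(3) nonvanishing]])
qed

lemma nowhere_dense_proj_over:
  assumes Baire: "Baire_space G" and atlas: "C1_atlas X m A" and Haus: "Hausdorff_space X"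
    and H: "closedin (prod_topology G X) H"
    and slices: "\<forall>(g0, x0) \<in> H. \<exists>n > m. has_slice G X m A H g0 x0 n"
    and \<L>: "countable \<L>" "\<And>L. L \<in> \<L> \<Longrightarrow> compactin X L"
      "\<And>x N. openin X N \<Longrightarrow> x \<in> N \<Longrightarrow> \<exists>L\<in>\<L>. x \<in> L \<and> L \<subseteq> N"
    and K: "compactin X K"
  shows "nowhere_dense_in G (proj_over G H K)"
proof -
  have closed: "closedin G (proj_over G H K)" by (rule closedin_proj_over[OF H K])
  have "G interior_of proj_over G H K = {}"
  proof (rule ccontr)
    assume ne: "G interior_of proj_over G H K \<noteq> {}"
    have closed_L: "closedin G (proj_over G H (K \<inter> L))" if "L \<in> \<L>" for L
      by (rule closedin_proj_over[OF H compactin_Int[OF Haus K \<L>(2)[OF that]]])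
    obtain g where g: "g \<in> G interior_of proj_over G H K"
      and g_int: "\<And>L. L \<in> \<L> \<Longrightarrow> g \<in> proj_over G H (K \<inter> L) \<Longrightarrow>
                    g \<in> G interior_of proj_over G H (K \<inter> L)"
      using Baire_space_point_in_interiors[OF Baire \<L>(1), where C = "\<lambda>L. proj_over G H (K \<inter> L)",
          OF closed_L openin_interior_of ne] by blast
    then have "g \<in> proj_over G H K" by (meson interior_of_subset subsetD)
    then obtain x where x: "x \<in> K" "(g, x) \<in> H" and gG: "g \<in> topspace G"
      by (auto simp: proj_over_def)
    from bspec[OF slices x(2)] obtain n where "m < n" "has_slice G X m A H g x n" by auto
    then obtain N where N: "openin X N" "x \<in> N" "g \<notin> G interior_of proj_over G H N"
      by (metis slice_imp_not_interior_proj_over[OF atlas])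
    obtain L where L: "L \<in> \<L>" "x \<in> L" "L \<subseteq> N" using \<L>(3)[OF N(1,2)] by blast
    have "g \<in> proj_over G H (K \<inter> L)" using x gG L(2) by (auto simp: proj_over_def)
    then have "g \<in> G interior_of proj_over G H (K \<inter> L)" by (rule g_int[OF L(1)])
    also have "\<dots> \<subseteq> G interior_of proj_over G H N"
      using L(3) by (intro interior_of_mono proj_over_mono) blast
    finally show False using N(3) by blast
  qed
  then show ?thesis
    unfolding nowhere_dense_in_def closure_of_closedin[OF closed] using closedin_subset[OF closed] by simp
qed

theorem theorem4p2:
  fixes G :: "'g topology" and X :: "'x topology" and m :: nat
    and A :: "('x set \<times> ('x \<Rightarrow> (nat \<Rightarrow> real))) set" and H :: "('g \<times> 'x) set"
  assumes "second_countable G" and "Baire_space G"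
    and "C1_manifold X m A"
    and "closedin (prod_topology G X) H"
    and "\<forall>(g0, x0) \<in> H. \<exists>n > m. has_slice G X m A H g0 x0 n"
  shows "meager_in G {g \<in> topspace G. \<exists>x \<in> topspace X. (g, x) \<in> H} \<and>
           (compact_space X \<longrightarrow>
           closedin G {g \<in> topspace G. \<exists>x \<in> topspace X. (g, x) \<in> H} \<and>
           nowhere_dense_in G {g \<in> topspace G. \<exists>x \<in> topspace X. (g, x) \<in> H})"
proof -
  have Haus: "Hausdorff_space X" and sc: "second_countable X" and atlas: "C1_atlas X m A"
    using assms(3) unfolding C1_manifold_def by blast+
  obtain \<L> where \<L>: "countable \<L>" "\<And>L. L \<in> \<L> \<Longrightarrow> compactin X L"
    "\<And>x N. openin X N \<Longrightarrow> x \<in> N \<Longrightarrow> \<exists>L\<in>\<L>. x \<in> L \<and> L \<subseteq> N"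
    using countable_compact_neighbourhoods[OF sc C1_atlas_imp_locally_compact_space[OF atlas] Haus]
    by blast
  have nowhere_dense: "nowhere_dense_in G (proj_over G H K)" if "compactin X K" for K
    by (rule nowhere_dense_proj_over[OF assms(2) atlas Haus assms(4,5) \<L> that])
  have cover: "topspace X = \<Union>\<L>"
  proof
    show "topspace X \<subseteq> \<Union>\<L>" using \<L>(3)[OF openin_topspace] by blast
    show "\<Union>\<L> \<subseteq> topspace X" using \<L>(2) compactin_subset_topspace by blast
  qed
  have "meager_in G (proj_over G H (topspace X))"
    unfolding meager_in_def
  proof (intro exI[of _ "proj_over G H ` \<L>"] conjI)
    show "countable (proj_over G H ` \<L>)" using \<L>(1) by simp
    show "\<forall>N\<in>proj_over G H ` \<L>. nowhere_dense_in G N" using \<L>(2) by (auto intro!: nowhere_dense)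
    show "proj_over G H (topspace X) = \<Union>(proj_over G H ` \<L>)"
      unfolding cover by (auto simp: proj_over_def)
  qed
  moreover have "closedin G (proj_over G H (topspace X)) \<and> nowhere_dense_in G (proj_over G H (topspace X))"
    if "compact_space X"
    using closedin_proj_over[OF assms(4)] nowhere_dense that unfolding compact_space_def by blast
  ultimately show ?thesis by (simp add: proj_over_def)
qed

end
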